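(* Let $f$ be as in the standing setting and quasi-strongly convex on $X$ with constant $\kappa_f>0$; let $\mu_f=\kappa_f/L_f$. Consider the fast gradient method: $x^0=y^0\in X$ and for $k\ge0$ $$x^{k+1}=\big[y^k-\tfrac1{L_f}\nabla f(y^k)\big]_X,\qquad y^{k+1}=x^{k+1}+\beta\,(x^{k+1}-x^k),\qquad \beta=\frac{\sqrt{L_f}-\sqrt{\kappa_f}}{\sqrt{L_f}+\sqrt{\kappa_f}}.$$ Assume that all iterates $y^k$ lie in $X$ and have the same projection onto $X^*$, i.e. $[y^k]_{X^*}=[y^0]_{X^*}$ for all $k\ge0$. Then $$f(x^k)-f^*\le\big(1-\sqrt{\mu_f}\big)^k\cdot 2\big(f(x^0)-f^*\big)\qquad\forall k\ge0.$$
   Context: Standing setting: $X\subseteq\mathbb{R}^n$ is a nonempty closed convex set; $f:X\to\mathbb{R}$ is convex and continuously differentiable, with $L_f$-Lipschitz continuous gradient on $X$ ($L_f>0$). Consider $f^*=\min_{x\in X}f(x)$ with optimal set $X^*$ nonempty and closed and $f^*$ finite. $\|\cdot\|$ is the Euclidean norm, $[u]_S$ is the Euclidean projection onto a closed convex set $S$, and $\bar x=[x]_{X^*}$. Quasi-strong convexity with constant $\kappa_f$: $f^*\ge f(x)+\langle\nabla f(x),\bar x-x\rangle+\frac{\kappa_f}{2}\|x-\bar x\|^2$ for all $x\in X$ (this forces $\kappa_f\le L_f$). *)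

theory Defs
  imports "HOL-Analysis.Analysis"
begin

definition proj :: "'a::euclidean_space set \<Rightarrow> 'a \<Rightarrow> 'a" where
  "proj S u = closest_point S u"

definition optset :: "'a set \<Rightarrow> ('a \<Rightarrow> real) \<Rightarrow> 'a set" where
  "optset X f = {x \<in> X. \<forall>y\<in>X. f x \<le> f y}"

definition quasi_strongly_convex ::
  "'a::euclidean_space set \<Rightarrow> ('a \<Rightarrow> real) \<Rightarrow> ('a \<Rightarrow> 'a) \<Rightarrow> real \<Rightarrow> bool" where
  "quasi_strongly_convex X f g \<kappa> \<longleftrightarrow>
     (\<forall>x\<in>X. let xb = proj (optset X f) x in
        (INF z\<in>X. f z) \<ge> f x + g x \<bullet> (xb - x) + \<kappa> / 2 * (norm (x - xb))\<^sup>2)"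

end

theory Submission
  imports Defs
begin

text \<open>Write \<open>q = sqrt (\<kappa> / L)\<close> and \<open>x\<^sup>*\<close> for the common projection of all \<open>y k\<close> onto the optimal set.
  The momentum step makes \<open>y k\<close> a convex combination of \<open>x k\<close> and an auxiliary point \<open>v k\<close>.
  Comparing the projected gradient step from \<open>y k\<close> once with \<open>x k\<close> (convexity) and once with
  \<open>x\<^sup>*\<close> (quasi-strong convexity at \<open>y k\<close>, which needs the projection of \<open>y k\<close> to be \<open>x\<^sup>*\<close>)
  shows that \<open>V k = f (x k) - f\<^sup>* + \<kappa>/2 \<parallel>v k - x\<^sup>*\<parallel>\<^sup>2\<close> contracts by the factor \<open>1 - q\<close>.
  Finally \<open>V 0 \<le> 2 (f (x 0) - f\<^sup>*)\<close> by quadratic growth, which follows from quasi-strong convexity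
  applied along the segment from \<open>x\<^sup>*\<close> to \<open>x 0\<close>. If \<open>\<kappa> > L\<close>, quasi-strong convexity and the descent
  lemma force every \<open>y k\<close> to be optimal and the bound is trivial.\<close>

lemma convex_segment_mem:
  assumes "convex X" "u \<in> X" "w \<in> X" "0 \<le> t" "t \<le> 1"
  shows "u + t *\<^sub>R (w - u) \<in> X"
  using convexD_alt[OF assms] by (simp add: algebra_simps)

lemma norm_square_convex_combination:
  fixes a b :: "'a::real_inner"
  assumes "0 \<le> q" "q \<le> 1"
  shows "(norm ((1 - q) *\<^sub>R a + q *\<^sub>R b))\<^sup>2 \<le> (1 - q) * (norm a)\<^sup>2 + q * (norm b)\<^sup>2"
proof -
  have "(1 - q) * (norm a)\<^sup>2 + q * (norm b)\<^sup>2 - (norm ((1 - q) *\<^sub>R a + q *\<^sub>R b))\<^sup>2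
      = q * (1 - q) * (norm (a - b))\<^sup>2"
    unfolding power2_norm_eq_inner
    by (simp add: inner_add_left inner_add_right inner_diff_left inner_diff_right
        inner_commute[of b a] algebra_simps)
  then show ?thesis using assms by (smt (verit) mult_nonneg_nonneg zero_le_power2)
qed

lemma has_field_derivative_along_segment:
  fixes f :: "'a::real_inner \<Rightarrow> real"
  assumes "convex X" "u \<in> X" "w \<in> X" "t \<in> {0..1}"
    and f_grad: "\<And>z. z \<in> X \<Longrightarrow> (f has_derivative (\<lambda>h. g z \<bullet> h)) (at z within X)"
  shows "((\<lambda>t. f (u + t *\<^sub>R (w - u))) has_field_derivative g (u + t *\<^sub>R (w - u)) \<bullet> (w - u))
           (at t within {0..1})"
proof -
  have segment: "(\<lambda>t. u + t *\<^sub>R (w - u)) ` {0..1} \<subseteq> X"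
    using convex_segment_mem[OF assms(1-3)] by auto
  have "((\<lambda>t. u + t *\<^sub>R (w - u)) has_derivative (\<lambda>h. h *\<^sub>R (w - u))) (at t within {0..1})"
    by (auto intro!: derivative_eq_intros)
  from has_derivative_in_compose2[OF f_grad segment \<open>t \<in> {0..1}\<close> this]
  show ?thesis
    by (simp add: has_field_derivative_def mult_commute_abs)
qed

lemma convex_on_gradient_inequality:
  fixes f :: "'a::real_inner \<Rightarrow> real"
  assumes "convex_on X f" "u \<in> X" "w \<in> X"
    and f_grad: "\<And>z. z \<in> X \<Longrightarrow> (f has_derivative (\<lambda>h. g z \<bullet> h)) (at z within X)"
  shows "f u + g u \<bullet> (w - u) \<le> f w"
proof -
  define \<phi> where "\<phi> = (\<lambda>t. f (u + t *\<^sub>R (w - u)))"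
  have "(\<phi> has_field_derivative g u \<bullet> (w - u)) (at 0 within {0..1})"
    using has_field_derivative_along_segment[OF convex_on_imp_convex[OF assms(1)] assms(2,3) _ f_grad, of 0]
    by (simp add: \<phi>_def)
  then have slope_lim: "((\<lambda>t. (\<phi> t - \<phi> 0) / t) \<longlongrightarrow> g u \<bullet> (w - u)) (at_right 0)"
    by (simp add: has_field_derivative_iff at_within_Icc_at_right)
  have "eventually (\<lambda>t. (\<phi> t - \<phi> 0) / t \<le> \<phi> 1 - \<phi> 0) (at_right 0)"
    using eventually_at_right_real[OF zero_less_one]
  proof eventually_elim
    case (elim t)
    have "\<phi> t = f ((1 - t) *\<^sub>R u + t *\<^sub>R w)" by (simp add: \<phi>_def algebra_simps)
    also have "\<dots> \<le> (1 - t) * \<phi> 0 + t * \<phi> 1"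
      using elim assms(1-3) by (auto simp: \<phi>_def intro: convex_onD)
    finally show ?case using elim by (simp add: divide_simps algebra_simps)
  qed
  then have "g u \<bullet> (w - u) \<le> \<phi> 1 - \<phi> 0"
    by (rule tendsto_upperbound[OF slope_lim]) simp
  then show ?thesis by (simp add: \<phi>_def)
qed

lemma lipschitz_gradient_descent_lemma:
  fixes f :: "'a::real_inner \<Rightarrow> real"
  assumes "convex X" "u \<in> X" "w \<in> X"
    and f_grad: "\<And>z. z \<in> X \<Longrightarrow> (f has_derivative (\<lambda>h. g z \<bullet> h)) (at z within X)"
    and g_lip: "\<And>a b. a \<in> X \<Longrightarrow> b \<in> X \<Longrightarrow> norm (g a - g b) \<le> L * norm (a - b)"
  shows "f w \<le> f u + g u \<bullet> (w - u) + L / 2 * (norm (w - u))\<^sup>2"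
proof -
  define d where "d = w - u"
  define \<phi> where "\<phi> = (\<lambda>t. f (u + t *\<^sub>R d))"
  define h where "h t = \<phi> t - t * (g u \<bullet> d) - L / 2 * t\<^sup>2 * (norm d)\<^sup>2" for t
  define h' where "h' t = g (u + t *\<^sub>R d) \<bullet> d - g u \<bullet> d - L * t * (norm d)\<^sup>2" for t
  have "(h has_field_derivative h' t) (at t within {0..1})" if "t \<in> {0..1}" for t
  proof -
    have "(\<phi> has_field_derivative g (u + t *\<^sub>R d) \<bullet> d) (at t within {0..1})"
      unfolding \<phi>_def d_def by (rule has_field_derivative_along_segment[OF assms(1-3) that f_grad])
    then show ?thesis
      unfolding h_def[abs_def] h'_def by (auto intro!: derivative_eq_intros)
  qed
  then obtain t where t: "t \<in> {0..1}" and mvt: "h 1 - h 0 = h' t"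
    using mvt_very_simple[of 0 1 h "\<lambda>t. (*) (h' t)"] by (auto simp: has_field_derivative_def)
  have "(g (u + t *\<^sub>R d) - g u) \<bullet> d \<le> norm (g (u + t *\<^sub>R d) - g u) * norm d"
    by (rule norm_cauchy_schwarz)
  also have "\<dots> \<le> L * norm (t *\<^sub>R d) * norm d"
    using g_lip[OF convex_segment_mem[OF assms(1-3)] \<open>u \<in> X\<close>] t
    by (intro mult_right_mono) (auto simp: d_def)
  also have "\<dots> = L * t * (norm d)\<^sup>2" using t by (simp add: power2_eq_square)
  finally have "h 1 \<le> h 0" using mvt by (simp add: h'_def inner_diff_left)
  then show ?thesis by (simp add: h_def \<phi>_def d_def)
qed

lemma projected_gradient_step:
  fixes f :: "'a::euclidean_space \<Rightarrow> real"
  assumes "convex X" "closed X" "y \<in> X" "z \<in> X" "L > 0"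
    and f_grad: "\<And>z. z \<in> X \<Longrightarrow> (f has_derivative (\<lambda>h. g z \<bullet> h)) (at z within X)"
    and g_lip: "\<And>a b. a \<in> X \<Longrightarrow> b \<in> X \<Longrightarrow> norm (g a - g b) \<le> L * norm (a - b)"
    and xp: "xp = closest_point X (y - (1 / L) *\<^sub>R g y)"
  shows "f xp \<le> f y + g y \<bullet> (z - y) + L * ((y - xp) \<bullet> (y - z)) - L / 2 * (norm (y - xp))\<^sup>2"
proof -
  have "xp \<in> X" using xp closest_point_in_set[OF \<open>closed X\<close>] \<open>y \<in> X\<close> by auto
  have descent: "f xp \<le> f y + g y \<bullet> (xp - y) + L / 2 * (norm (y - xp))\<^sup>2"
    using lipschitz_gradient_descent_lemma[OF \<open>convex X\<close> \<open>y \<in> X\<close> \<open>xp \<in> X\<close> f_grad g_lip]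
    by (simp add: norm_minus_commute)
  have "((y - (1 / L) *\<^sub>R g y) - xp) \<bullet> (z - xp) \<le> 0"
    unfolding xp by (rule closest_point_dot[OF assms(1,2,4)])
  then have "(y - xp) \<bullet> (z - xp) - (1 / L) * (g y \<bullet> (z - xp)) \<le> 0"
    by (simp add: inner_diff_left algebra_simps)
  then have "g y \<bullet> (xp - z) \<le> L * ((y - xp) \<bullet> (xp - z))"
    using \<open>L > 0\<close> by (simp add: field_simps inner_diff_left inner_diff_right)
  moreover have "L * ((y - xp) \<bullet> (xp - z)) = L * ((y - xp) \<bullet> (y - z)) - L * (norm (y - xp))\<^sup>2"
    by (simp add: power2_norm_eq_inner inner_diff_right algebra_simps)
  moreover have "g y \<bullet> (xp - y) = g y \<bullet> (z - y) + g y \<bullet> (xp - z)"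
    by (simp add: inner_diff_right)
  ultimately show ?thesis
    using descent by linarith
qed

lemma optset_Inf_eq:
  assumes "p \<in> optset X f"
  shows "(INF z\<in>X. f z) = f p"
  using assms unfolding optset_def by (intro cInf_eq_minimum) auto

lemma proj_optset_mem:
  assumes "optset X f \<noteq> {}" "closed (optset X f)"
  shows "proj (optset X f) x \<in> optset X f"
  unfolding proj_def by (rule closest_point_in_set[OF assms(2,1)])

lemma optset_convex:
  assumes "convex_on X f"
  shows "convex (optset X f)"
  unfolding convex_alt
proof (intro ballI allI impI)
  fix a b and u :: real
  assume a: "a \<in> optset X f" and b: "b \<in> optset X f" and u: "0 \<le> u \<and> u \<le> 1"
  then have "a \<in> X" "b \<in> X" and "f a = f b" by (auto simp: optset_def intro: antisym)
  then have "(1 - u) *\<^sub>R a + u *\<^sub>R b \<in> X"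
    using convex_on_imp_convex[OF assms] u by (auto intro: convexD_alt)
  moreover have "f ((1 - u) *\<^sub>R a + u *\<^sub>R b) \<le> f a"
    using convex_onD[OF assms, of u a b] u \<open>a \<in> X\<close> \<open>b \<in> X\<close> \<open>f a = f b\<close>
    by (simp add: algebra_simps)
  ultimately show "(1 - u) *\<^sub>R a + u *\<^sub>R b \<in> optset X f"
    using a unfolding optset_def by (auto intro: order_trans)
qed

lemma closest_point_on_segment_to_closest_point:
  fixes a :: "'a::euclidean_space"
  assumes "convex S" "closed S" "S \<noteq> {}" "0 \<le> t" "t \<le> 1"
  defines "p \<equiv> closest_point S a"
  shows "closest_point S (p + t *\<^sub>R (a - p)) = p"
proof -
  let ?z = "p + t *\<^sub>R (a - p)"
  have "dist ?z p \<le> dist ?z s" if "s \<in> S" for s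
  proof -
    have "dist a p \<le> dist a ?z + dist ?z s"
      using closest_point_le[OF \<open>closed S\<close> that, of a] dist_triangle[of a s ?z] by (simp add: p_def)
    moreover have "a - ?z = (1 - t) *\<^sub>R (a - p)" by (simp add: algebra_simps)
    then have "dist a ?z = (1 - t) * dist a p" using \<open>t \<le> 1\<close> by (simp add: dist_norm)
    moreover have "dist ?z p = t * dist a p" using \<open>0 \<le> t\<close> by (simp add: dist_norm norm_minus_commute)
    ultimately show ?thesis by (simp add: algebra_simps)
  qed
  moreover have "p \<in> S" unfolding p_def using closest_point_in_set[OF assms(2,3)] .
  ultimately show ?thesis using closest_point_unique[OF assms(1,2)] by auto
qed

lemma quasi_strongly_convexD:
  assumes "quasi_strongly_convex X f g \<kappa>" "x \<in> X"
  shows "f x + g x \<bullet> (proj (optset X f) x - x) + \<kappa> / 2 * (norm (x - proj (optset X f) x))\<^sup>2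
           \<le> (INF z\<in>X. f z)"
  using assms unfolding quasi_strongly_convex_def Let_def by auto

lemma increment_ge_of_tangent_bound:
  fixes \<phi> \<phi>' :: "real \<Rightarrow> real"
  assumes deriv: "\<And>t. t \<in> {0..1} \<Longrightarrow> (\<phi> has_field_derivative \<phi>' t) (at t within {0..1})"
    and tangent: "\<And>t. t \<in> {0..1} \<Longrightarrow> \<phi> t - \<phi> 0 + c * t\<^sup>2 \<le> t * \<phi>' t"
    and min: "\<And>t. t \<in> {0..1} \<Longrightarrow> \<phi> 0 \<le> \<phi> t"
  shows "c \<le> \<phi> 1 - \<phi> 0"
proof -
  \<comment> \<open>The tangent bound says that the slope \<open>(\<phi> t - \<phi> 0) / t\<close> has derivative at least c.\<close>
  have lower: "c * (1 - s) \<le> \<phi> 1 - \<phi> 0" if "0 < s" "s < 1" for s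
  proof -
    define \<psi> where "\<psi> = (\<lambda>t. (\<phi> t - \<phi> 0) / t)"
    define \<psi>' where "\<psi>' t = (\<phi>' t * t - (\<phi> t - \<phi> 0)) / (t * t)" for t
    have "(\<psi> has_field_derivative \<psi>' t) (at t within {s..1})" if "t \<in> {s..1}" for t
    proof -
      have "(\<phi> has_field_derivative \<phi>' t) (at t within {s..1})"
        using deriv[of t] that \<open>0 < s\<close> by (auto intro: has_field_derivative_subset)
      then show ?thesis
        using that \<open>0 < s\<close> unfolding \<psi>_def \<psi>'_def by (auto intro!: derivative_eq_intros)
    qed
    then obtain t where t: "t \<in> {s..1}" and mvt: "\<psi> 1 - \<psi> s = \<psi>' t * (1 - s)"
      using mvt_very_simple[of s 1 \<psi> "\<lambda>t. (*) (\<psi>' t)"] \<open>s < 1\<close>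
      by (auto simp: has_field_derivative_def)
    have "c \<le> \<psi>' t"
      using tangent[of t] t \<open>0 < s\<close> by (simp add: \<psi>'_def field_simps power2_eq_square)
    then have "c * (1 - s) \<le> \<psi> 1 - \<psi> s"
      unfolding mvt using \<open>s < 1\<close> by (intro mult_right_mono) auto
    moreover have "0 \<le> \<psi> s" using min[of s] that by (simp add: \<psi>_def)
    ultimately show ?thesis by (simp add: \<psi>_def)
  qed
  have "eventually (\<lambda>s. c * (1 - s) \<le> \<phi> 1 - \<phi> 0) (at_right 0)"
    using eventually_at_right_real[OF zero_less_one] by eventually_elim (auto intro: lower)
  then have "c * (1 - 0) \<le> \<phi> 1 - \<phi> 0"
    by (intro tendsto_upperbound[of "\<lambda>s. c * (1 - s)"] tendsto_intros) auto
  then show ?thesis by simp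
qed

lemma quasi_strongly_convex_quadratic_growth:
  fixes f :: "'a::euclidean_space \<Rightarrow> real"
  assumes "convex_on X f" "x \<in> X" "optset X f \<noteq> {}" "closed (optset X f)"
    and f_grad: "\<And>z. z \<in> X \<Longrightarrow> (f has_derivative (\<lambda>h. g z \<bullet> h)) (at z within X)"
    and qsc: "quasi_strongly_convex X f g \<kappa>"
  shows "\<kappa> / 2 * (norm (x - proj (optset X f) x))\<^sup>2 \<le> f x - (INF z\<in>X. f z)"
proof -
  define p where "p = proj (optset X f) x"
  define D where "D = x - p"
  have "convex X" using convex_on_imp_convex[OF assms(1)] .
  have "p \<in> optset X f" unfolding p_def by (rule proj_optset_mem[OF assms(3,4)])
  then have "p \<in> X" and p_min: "\<And>z. z \<in> X \<Longrightarrow> f p \<le> f z" and Inf: "(INF z\<in>X. f z) = f p"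
    by (auto simp: optset_def optset_Inf_eq)
  have segment: "p + t *\<^sub>R D \<in> X" if "t \<in> {0..1}" for t
    unfolding D_def using convex_segment_mem[OF \<open>convex X\<close> \<open>p \<in> X\<close> \<open>x \<in> X\<close>] that by simp
  have "\<kappa> / 2 * (norm D)\<^sup>2 \<le> f (p + 1 *\<^sub>R D) - f (p + 0 *\<^sub>R D)"
  proof (rule increment_ge_of_tangent_bound)
    fix t :: real assume t: "t \<in> {0..1}"
    show "((\<lambda>t. f (p + t *\<^sub>R D)) has_field_derivative g (p + t *\<^sub>R D) \<bullet> D) (at t within {0..1})"
      unfolding D_def
      by (rule has_field_derivative_along_segment[OF \<open>convex X\<close> \<open>p \<in> X\<close> \<open>x \<in> X\<close> t f_grad])
    show "f (p + 0 *\<^sub>R D) \<le> f (p + t *\<^sub>R D)" using p_min[OF segment[OF t]] by simp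
    have "proj (optset X f) (p + t *\<^sub>R D) = p"
      using closest_point_on_segment_to_closest_point[OF optset_convex[OF assms(1)] assms(4,3)] t
      by (simp add: proj_def p_def D_def)
    then have "f (p + t *\<^sub>R D) + g (p + t *\<^sub>R D) \<bullet> (- (t *\<^sub>R D)) + \<kappa> / 2 * (norm (t *\<^sub>R D))\<^sup>2 \<le> f p"
      using quasi_strongly_convexD[OF qsc segment[OF t]] Inf by simp
    then show "f (p + t *\<^sub>R D) - f (p + 0 *\<^sub>R D) + \<kappa> / 2 * (norm D)\<^sup>2 * t\<^sup>2
        \<le> t * (g (p + t *\<^sub>R D) \<bullet> D)"
      using t by (simp add: power_mult_distrib algebra_simps)
  qed
  then show ?thesis by (simp add: D_def p_def Inf)
qed

lemma quasi_strongly_convex_const_le_lipschitz: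
  fixes f :: "'a::euclidean_space \<Rightarrow> real"
  assumes "convex X" "y \<in> X" "optset X f \<noteq> {}" "closed (optset X f)"
    and "proj (optset X f) y \<noteq> y"
    and f_grad: "\<And>z. z \<in> X \<Longrightarrow> (f has_derivative (\<lambda>h. g z \<bullet> h)) (at z within X)"
    and g_lip: "\<And>a b. a \<in> X \<Longrightarrow> b \<in> X \<Longrightarrow> norm (g a - g b) \<le> L * norm (a - b)"
    and qsc: "quasi_strongly_convex X f g \<kappa>"
  shows "\<kappa> \<le> L"
proof -
  define p where "p = proj (optset X f) y"
  have "p \<in> optset X f" unfolding p_def by (rule proj_optset_mem[OF assms(3,4)])
  then have "p \<in> X" and Inf: "(INF z\<in>X. f z) = f p" by (auto simp: optset_def optset_Inf_eq)
  have "f p \<le> f y + g y \<bullet> (p - y) + L / 2 * (norm (y - p))\<^sup>2"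
    using lipschitz_gradient_descent_lemma[OF assms(1,2) \<open>p \<in> X\<close> f_grad g_lip]
    by (simp add: norm_minus_commute)
  moreover have "f y + g y \<bullet> (p - y) + \<kappa> / 2 * (norm (y - p))\<^sup>2 \<le> f p"
    using quasi_strongly_convexD[OF qsc \<open>y \<in> X\<close>] Inf by (simp add: p_def)
  ultimately have "\<kappa> * (norm (y - p))\<^sup>2 \<le> L * (norm (y - p))\<^sup>2" by simp
  moreover have "(norm (y - p))\<^sup>2 > 0" using assms(5) by (simp add: p_def)
  ultimately show ?thesis by simp
qed

lemma accelerated_lyapunov_step:
  fixes x xp y v z :: "'a::real_inner" and q L Fx Fp Fz :: real
  assumes "0 < q" "q \<le> 1" "0 \<le> L"
    and y: "(1 + q) *\<^sub>R y = x + q *\<^sub>R v"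
    and step_x: "Fp \<le> Fx + L * ((y - xp) \<bullet> (y - x)) - L / 2 * (norm (y - xp))\<^sup>2"
    and step_z: "Fp \<le> Fz + L * ((y - xp) \<bullet> (y - z)) - L / 2 * (norm (y - xp))\<^sup>2
                    - q\<^sup>2 * L / 2 * (norm (y - z))\<^sup>2"
  shows "Fp - Fz + q\<^sup>2 * L / 2 * (norm (x + (1 / q) *\<^sub>R (xp - x) - z))\<^sup>2
           \<le> (1 - q) * (Fx - Fz + q\<^sup>2 * L / 2 * (norm (v - z))\<^sup>2)"
proof -
  \<comment> \<open>Average the two bounds with weights \<open>1 - q\<close> and \<open>q\<close>; then \<open>q (x + (xp - x) / q - z) = w - e\<close>,
    and \<open>w = q ((1 - q) (v - z) + q (y - z))\<close> is controlled by convexity of the squared norm.\<close>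
  define e where "e = y - xp"
  define w where "w = (1 - q) *\<^sub>R (y - x) + q *\<^sub>R (y - z)"
  have "Fp = (1 - q) * Fp + q * Fp" by (simp add: algebra_simps)
  also have "\<dots> \<le> (1 - q) * (Fx + L * (e \<bullet> (y - x)) - L / 2 * (norm e)\<^sup>2)
      + q * (Fz + L * (e \<bullet> (y - z)) - L / 2 * (norm e)\<^sup>2 - q\<^sup>2 * L / 2 * (norm (y - z))\<^sup>2)"
    using step_x step_z \<open>0 < q\<close> \<open>q \<le> 1\<close> by (intro add_mono mult_left_mono) (auto simp: e_def)
  also have "\<dots> = Fz + (1 - q) * (Fx - Fz) + L * (e \<bullet> w) - L / 2 * (norm e)\<^sup>2
                     - q ^ 3 * L / 2 * (norm (y - z))\<^sup>2"
    by (simp add: w_def inner_add_right algebra_simps power3_eq_cube power2_eq_square)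
       (simp add: field_simps)
  finally have combined: "Fp - Fz \<le> (1 - q) * (Fx - Fz) + L * (e \<bullet> w) - L / 2 * (norm e)\<^sup>2
                              - q ^ 3 * L / 2 * (norm (y - z))\<^sup>2"
    by simp
  have "q\<^sup>2 * (norm (x + (1 / q) *\<^sub>R (xp - x) - z))\<^sup>2 = (norm (q *\<^sub>R (x + (1 / q) *\<^sub>R (xp - x) - z)))\<^sup>2"
    by (simp add: power_mult_distrib)
  also have "q *\<^sub>R (x + (1 / q) *\<^sub>R (xp - x) - z) = w - e"
    using \<open>0 < q\<close> by (simp add: w_def e_def algebra_simps)
  also have "(norm (w - e))\<^sup>2 = (norm w)\<^sup>2 - 2 * (e \<bullet> w) + (norm e)\<^sup>2"
    using dot_norm_neg[of w e] by (simp add: inner_commute)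
  finally have v_plus_norm: "q\<^sup>2 * (norm (x + (1 / q) *\<^sub>R (xp - x) - z))\<^sup>2
      = (norm w)\<^sup>2 - 2 * (e \<bullet> w) + (norm e)\<^sup>2" .
  have x_eq: "x = (1 + q) *\<^sub>R y - q *\<^sub>R v"
    using y by (simp add: algebra_simps)
  have "w = q *\<^sub>R ((1 - q) *\<^sub>R (v - z) + q *\<^sub>R (y - z))"
    unfolding w_def x_eq by (simp add: algebra_simps)
  then have "(norm w)\<^sup>2 = q\<^sup>2 * (norm ((1 - q) *\<^sub>R (v - z) + q *\<^sub>R (y - z)))\<^sup>2"
    by (simp add: power_mult_distrib)
  also have "\<dots> \<le> q\<^sup>2 * ((1 - q) * (norm (v - z))\<^sup>2 + q * (norm (y - z))\<^sup>2)"
    using norm_square_convex_combination[of q "v - z" "y - z"] \<open>0 < q\<close> \<open>q \<le> 1\<close>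
    by (intro mult_left_mono) auto
  finally have w_bound: "L * (norm w)\<^sup>2 \<le> L * (q\<^sup>2 * ((1 - q) * (norm (v - z))\<^sup>2 + q * (norm (y - z))\<^sup>2))"
    using \<open>0 \<le> L\<close> by (rule mult_left_mono)
  have "Fp - Fz + q\<^sup>2 * L / 2 * (norm (x + (1 / q) *\<^sub>R (xp - x) - z))\<^sup>2
      = Fp - Fz + L / 2 * ((norm w)\<^sup>2 - 2 * (e \<bullet> w) + (norm e)\<^sup>2)"
    unfolding v_plus_norm[symmetric] by (simp add: algebra_simps)
  also have "\<dots> \<le> (1 - q) * (Fx - Fz) + L / 2 * (norm w)\<^sup>2 - q ^ 3 * L / 2 * (norm (y - z))\<^sup>2"
    using combined by (simp add: algebra_simps)
  also have "\<dots> \<le> (1 - q) * (Fx - Fz + q\<^sup>2 * L / 2 * (norm (v - z))\<^sup>2)"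
    using w_bound by (simp add: field_simps power3_eq_cube power2_eq_square)
  finally show ?thesis .
qed

locale fast_gradient_method =
  fixes X :: "'a::euclidean_space set" and f :: "'a \<Rightarrow> real" and g :: "'a \<Rightarrow> 'a"
    and L \<kappa> :: real and x y :: "nat \<Rightarrow> 'a"
  assumes X_ne: "X \<noteq> {}" and X_closed: "closed X" and X_convex: "convex X"
    and f_convex: "convex_on X f"
    and f_grad: "\<And>z. z \<in> X \<Longrightarrow> (f has_derivative (\<lambda>h. g z \<bullet> h)) (at z within X)"
    and L_pos: "L > 0"
    and g_lip: "\<And>u v. u \<in> X \<Longrightarrow> v \<in> X \<Longrightarrow> norm (g u - g v) \<le> L * norm (u - v)"
    and opt_ne: "optset X f \<noteq> {}" and opt_closed: "closed (optset X f)"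
    and \<kappa>_pos: "\<kappa> > 0"
    and qsc: "quasi_strongly_convex X f g \<kappa>"
    and x0: "x 0 \<in> X" and y0: "y 0 = x 0"
    and x_step: "\<And>k. x (Suc k) = proj X (y k - (1 / L) *\<^sub>R g (y k))"
    and y_step: "\<And>k. y (Suc k) = x (Suc k) +
          ((sqrt L - sqrt \<kappa>) / (sqrt L + sqrt \<kappa>)) *\<^sub>R (x (Suc k) - x k)"
    and y_in: "\<And>k. y k \<in> X"
    and y_proj: "\<And>k. proj (optset X f) (y k) = proj (optset X f) (y 0)"
begin

definition xstar :: 'a where
  "xstar = proj (optset X f) (y 0)"

lemma xstar_optimal: "xstar \<in> optset X f"
  unfolding xstar_def by (rule proj_optset_mem[OF opt_ne opt_closed])

lemma
  shows xstar_in: "xstar \<in> X"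
    and f_xstar_le: "z \<in> X \<Longrightarrow> f xstar \<le> f z"
    and Inf_eq_f_xstar: "(INF z\<in>X. f z) = f xstar"
  using xstar_optimal by (auto simp: optset_def optset_Inf_eq)

lemma proj_y: "proj (optset X f) (y k) = xstar"
  unfolding xstar_def by (rule y_proj)

lemma x_in: "x k \<in> X"
  by (cases k) (simp_all add: x0 x_step proj_def closest_point_in_set[OF X_closed X_ne])

lemma gradient_step:
  assumes "z \<in> X"
  shows "f (x (Suc k)) \<le> f (y k) + g (y k) \<bullet> (z - y k) + L * ((y k - x (Suc k)) \<bullet> (y k - z))
           - L / 2 * (norm (y k - x (Suc k)))\<^sup>2"
  using projected_gradient_step[OF X_convex X_closed y_in assms L_pos f_grad g_lip] x_step
  by (simp add: proj_def)

lemma quasi_strongly_convex_at_y: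
  "f (y k) + g (y k) \<bullet> (xstar - y k) + \<kappa> / 2 * (norm (y k - xstar))\<^sup>2 \<le> f xstar"
  using quasi_strongly_convexD[OF qsc y_in, of k] Inf_eq_f_xstar by (simp add: proj_y)

lemma f_x_eq_f_xstar_if_lipschitz_less:
  assumes "L < \<kappa>"
  shows "f (x k) = f xstar"
proof -
  have y_eq: "y j = xstar" for j
    using quasi_strongly_convex_const_le_lipschitz[OF X_convex y_in opt_ne opt_closed _ f_grad g_lip qsc]
      assms proj_y by force
  have "f (x k) \<le> f xstar"
  proof (cases k)
    case 0
    then show ?thesis using y_eq[of 0] y0 by simp
  next
    case (Suc j)
    moreover have "0 \<le> L / 2 * (norm (xstar - x k))\<^sup>2" using L_pos by simp
    ultimately show ?thesis using gradient_step[OF xstar_in, of j] y_eq[of j] by simp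
  qed
  then show ?thesis using f_xstar_le[OF x_in] by (rule antisym)
qed

definition rate :: real where
  "rate = sqrt (\<kappa> / L)"

lemma rate_pos: "0 < rate"
  using \<kappa>_pos L_pos by (simp add: rate_def)

lemma rate_le_one: "\<kappa> \<le> L \<Longrightarrow> rate \<le> 1"
  using L_pos by (simp add: rate_def)

lemma rate_square_mult: "rate\<^sup>2 * L = \<kappa>"
  using \<kappa>_pos L_pos by (simp add: rate_def)

lemma momentum_eq: "(sqrt L - sqrt \<kappa>) / (sqrt L + sqrt \<kappa>) = (1 - rate) / (1 + rate)"
proof -
  have "sqrt \<kappa> = sqrt L * rate"
    using L_pos by (simp add: rate_def real_sqrt_divide)
  then have "(sqrt L - sqrt \<kappa>) / (sqrt L + sqrt \<kappa>) = (sqrt L * (1 - rate)) / (sqrt L * (1 + rate))"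
    by (simp add: algebra_simps)
  then show ?thesis using L_pos by simp
qed

text \<open>The points \<open>v k\<close> are chosen so that \<open>y k\<close> is the convex combination
  \<open>(x k + rate *\<^sub>R v k) /\<^sub>R (1 + rate)\<close>; this is exactly what the momentum coefficient
  \<open>(1 - rate) / (1 + rate)\<close> achieves.\<close>

definition v :: "nat \<Rightarrow> 'a" where
  "v k = (case k of 0 \<Rightarrow> x 0 | Suc j \<Rightarrow> x j + (1 / rate) *\<^sub>R (x (Suc j) - x j))"

lemma y_eq_combination: "(1 + rate) *\<^sub>R y k = x k + rate *\<^sub>R v k"
proof (cases k)
  case 0
  then show ?thesis using y0 by (simp add: v_def algebra_simps)
next
  case (Suc j)
  have "(1 + rate) *\<^sub>R y k = (1 + rate) *\<^sub>R x k + (1 - rate) *\<^sub>R (x k - x j)"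
    using y_step[of j] momentum_eq rate_pos Suc by (simp add: scaleR_add_right)
  also have "\<dots> = x k + rate *\<^sub>R v k"
    using rate_pos Suc by (simp add: v_def algebra_simps)
  finally show ?thesis .
qed

definition lyapunov :: "nat \<Rightarrow> real" where
  "lyapunov k = f (x k) - f xstar + \<kappa> / 2 * (norm (v k - xstar))\<^sup>2"

lemma lyapunov_Suc_le:
  assumes "\<kappa> \<le> L"
  shows "lyapunov (Suc k) \<le> (1 - rate) * lyapunov k"
proof -
  have "f (y k) + g (y k) \<bullet> (x k - y k) \<le> f (x k)"
    by (rule convex_on_gradient_inequality[OF f_convex y_in x_in f_grad])
  then have step_x: "f (x (Suc k)) \<le> f (x k) + L * ((y k - x (Suc k)) \<bullet> (y k - x k))
                       - L / 2 * (norm (y k - x (Suc k)))\<^sup>2"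
    using gradient_step[OF x_in[of k], of k] by simp
  have step_xstar: "f (x (Suc k)) \<le> f xstar + L * ((y k - x (Suc k)) \<bullet> (y k - xstar))
      - L / 2 * (norm (y k - x (Suc k)))\<^sup>2 - rate\<^sup>2 * L / 2 * (norm (y k - xstar))\<^sup>2"
    using gradient_step[OF xstar_in, of k] quasi_strongly_convex_at_y[of k]
    unfolding rate_square_mult by linarith
  have "v (Suc k) = x k + (1 / rate) *\<^sub>R (x (Suc k) - x k)" by (simp add: v_def)
  then show ?thesis
    using accelerated_lyapunov_step[OF rate_pos rate_le_one[OF assms] _ y_eq_combination step_x step_xstar]
      L_pos unfolding lyapunov_def rate_square_mult by simp
qed

lemma lyapunov_le:
  assumes "\<kappa> \<le> L"
  shows "lyapunov k \<le> (1 - rate) ^ k * lyapunov 0"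
proof (induction k)
  case 0
  then show ?case by simp
next
  case (Suc k)
  have "lyapunov (Suc k) \<le> (1 - rate) * lyapunov k"
    by (rule lyapunov_Suc_le[OF assms])
  also have "\<dots> \<le> (1 - rate) * ((1 - rate) ^ k * lyapunov 0)"
    using Suc.IH rate_le_one[OF assms] by (intro mult_left_mono) auto
  finally show ?case by simp
qed

lemma lyapunov_0_le: "lyapunov 0 \<le> 2 * (f (x 0) - f xstar)"
proof -
  have "proj (optset X f) (x 0) = xstar" using proj_y[of 0] y0 by simp
  then show ?thesis
    using quasi_strongly_convex_quadratic_growth[OF f_convex x0 opt_ne opt_closed f_grad qsc]
    by (simp add: lyapunov_def v_def Inf_eq_f_xstar)
qed

theorem convergence_rate:
  "f (x k) - (INF z\<in>X. f z) \<le> (1 - sqrt (\<kappa> / L)) ^ k * (2 * (f (x 0) - (INF z\<in>X. f z)))"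
proof (cases "\<kappa> \<le> L")
  case True
  have "f (x k) - f xstar \<le> lyapunov k"
    using \<kappa>_pos by (simp add: lyapunov_def)
  also have "\<dots> \<le> (1 - rate) ^ k * lyapunov 0"
    by (rule lyapunov_le[OF True])
  also have "\<dots> \<le> (1 - rate) ^ k * (2 * (f (x 0) - f xstar))"
    using lyapunov_0_le rate_le_one[OF True] by (intro mult_left_mono) auto
  finally show ?thesis by (simp add: Inf_eq_f_xstar rate_def)
next
  case False
  then show ?thesis
    using f_x_eq_f_xstar_if_lipschitz_less by (simp add: Inf_eq_f_xstar)
qed

end

theorem theorem14:
  fixes X :: "'a::euclidean_space set"
    and f :: "'a \<Rightarrow> real" and g :: "'a \<Rightarrow> 'a"
    and L \<kappa> :: real and x y :: "nat \<Rightarrow> 'a"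
  assumes X_ne: "X \<noteq> {}" and X_closed: "closed X" and X_convex: "convex X"
    and f_convex: "convex_on X f"
    and f_grad: "\<And>z. z \<in> X \<Longrightarrow> (f has_derivative (\<lambda>h. g z \<bullet> h)) (at z within X)"
    and g_cont: "continuous_on X g"
    and L_pos: "L > 0"
    and g_lip: "\<And>u v. u \<in> X \<Longrightarrow> v \<in> X \<Longrightarrow> norm (g u - g v) \<le> L * norm (u - v)"
    and bdd: "bdd_below (f ` X)"
    and opt_ne: "optset X f \<noteq> {}" and opt_closed: "closed (optset X f)"
    and \<kappa>_pos: "\<kappa> > 0"
    and qsc: "quasi_strongly_convex X f g \<kappa>"
    and x0: "x 0 \<in> X" and y0: "y 0 = x 0"
    and x_step: "\<And>k. x (Suc k) = proj X (y k - (1 / L) *\<^sub>R g (y k))"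
    and y_step: "\<And>k. y (Suc k) = x (Suc k) +
          ((sqrt L - sqrt \<kappa>) / (sqrt L + sqrt \<kappa>)) *\<^sub>R (x (Suc k) - x k)"
    and y_in: "\<And>k. y k \<in> X"
    and y_proj: "\<And>k. proj (optset X f) (y k) = proj (optset X f) (y 0)"
  shows "\<forall>k. f (x k) - (INF z\<in>X. f z)
           \<le> (1 - sqrt (\<kappa> / L)) ^ k * (2 * (f (x 0) - (INF z\<in>X. f z)))"
proof -
  interpret fast_gradient_method X f g L \<kappa> x y
    by (rule fast_gradient_method.intro) (fact assms)+
  show ?thesis using convergence_rate by blast
qed

end
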